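(* Let $\theta$ be an irrational real number. For integers $j\geq0$ and real $t>0$ define $$\tau_j(t)=-(-1)^j\,\frac{q_{j-1}-(-1)^j\frac{4i\pi t}{q_{j-2}+\theta_jq_{j-1}}}{q_j+(-1)^j\frac{4i\pi t}{q_{j-1}+\theta_{j+1}q_j}}.$$ Then for all $j\geq0$ and $t>0$, $$\bigl(\tau_j(t)-(-1)^ja_{j+1}\bigr)\,\tau_{j+1}(t)=-1.$$
   Context: Continued fraction notation for irrational $\theta$: $\theta_0=\theta$, $a_k=\lfloor\theta_k\rfloor$, $\theta_{k}=\frac{1}{\theta_{k-1}-a_{k-1}}$ for $k\geq1$. Denominators of convergents: $q_{-2}=1$, $q_{-1}=0$, $q_k=q_{k-2}+a_kq_{k-1}$ for $k\geq0$. *)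

theory Defs
  imports Complex_Main
begin

fun cf_theta :: "real \<Rightarrow> nat \<Rightarrow> real" where
  "cf_theta x 0 = x"
| "cf_theta x (Suc k) = 1 / (cf_theta x k - of_int \<lfloor>cf_theta x k\<rfloor>)"

definition cf_a :: "real \<Rightarrow> nat \<Rightarrow> int" where
  "cf_a x k = \<lfloor>cf_theta x k\<rfloor>"

text \<open>Shifted denominators: cf_qs x n = q_(n-2), so q_(-2) = 1, q_(-1) = 0,
  q_k = q_(k-2) + a_k q_(k-1).\<close>
fun cf_qs :: "real \<Rightarrow> nat \<Rightarrow> int" where
  "cf_qs x 0 = 1"
| "cf_qs x (Suc 0) = 0"
| "cf_qs x (Suc (Suc n)) = cf_qs x n + cf_a x n * cf_qs x (Suc n)"

definition cf_q :: "real \<Rightarrow> int \<Rightarrow> int" where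
  "cf_q x k = cf_qs x (nat (k + 2))"

definition tau :: "real \<Rightarrow> nat \<Rightarrow> real \<Rightarrow> complex" where
  "tau x j t =
     - ((-1) ^ j) *
     ((of_int (cf_q x (int j - 1)) - (-1) ^ j * (4 * \<i> * of_real pi * of_real t)
          / of_real (of_int (cf_q x (int j - 2)) + cf_theta x j * of_int (cf_q x (int j - 1))))
      / (of_int (cf_q x (int j)) + (-1) ^ j * (4 * \<i> * of_real pi * of_real t)
          / of_real (of_int (cf_q x (int j - 1)) + cf_theta x (j + 1) * of_int (cf_q x (int j)))))"

end

theory Submission
  imports Defs
begin

text \<open>Write \<open>P\<^sub>n = q\<^sub>n\<^sub>-\<^sub>2 + \<theta>\<^sub>n q\<^sub>n\<^sub>-\<^sub>1\<close> for the denominators occurring in \<open>\<tau>\<^sub>j\<close>.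
  They satisfy \<open>P\<^sub>n\<^sub>+\<^sub>1 = \<theta>\<^sub>n\<^sub>+\<^sub>1 P\<^sub>n\<close>, hence are positive, and
  \<open>1/P\<^sub>j = a\<^sub>j\<^sub>+\<^sub>1/P\<^sub>j\<^sub>+\<^sub>1 + 1/P\<^sub>j\<^sub>+\<^sub>2\<close>. With \<open>s = (-1)\<^sup>j\<close>, \<open>c = 4i\<pi>t\<close> this gives
  \<open>\<tau>\<^sub>j = -s M/N\<close> and \<open>\<tau>\<^sub>j\<^sub>+\<^sub>1 = s N/D\<close> where \<open>M + a\<^sub>j\<^sub>+\<^sub>1 N = D\<close>, so the product
  collapses to \<open>-s\<^sup>2 = -1\<close>; \<open>N\<close> and \<open>D\<close> are nonzero because their imaginary
  parts \<open>\<plusminus>4\<pi>t/P\<close> are.\<close>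

lemma cf_theta_not_Rats: "x \<notin> \<rat> \<Longrightarrow> cf_theta x k \<notin> \<rat>"
proof (induction k)
  case (Suc k)
  let ?frac = "cf_theta x k - of_int \<lfloor>cf_theta x k\<rfloor>"
  show ?case
  proof
    assume "cf_theta x (Suc k) \<in> \<rat>"
    then have "inverse (1 / ?frac) \<in> \<rat>" by (simp only: cf_theta.simps Rats_inverse)
    then have "?frac + of_int \<lfloor>cf_theta x k\<rfloor> \<in> \<rat>" by (intro Rats_add) auto
    with Suc show False by simp
  qed
qed simp

lemma cf_theta_Suc_gt_1:
  assumes "x \<notin> \<rat>"
  shows "cf_theta x (Suc k) > 1"
proof -
  have "cf_theta x k \<noteq> of_int \<lfloor>cf_theta x k\<rfloor>"
    using cf_theta_not_Rats[OF assms] by (metis Rats_of_int)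
  then have "0 < cf_theta x k - of_int \<lfloor>cf_theta x k\<rfloor>"
    using of_int_floor_le[of "cf_theta x k"] by linarith
  moreover have "cf_theta x k - of_int \<lfloor>cf_theta x k\<rfloor> < 1" by linarith
  ultimately show ?thesis by simp
qed

lemma cf_theta_eq_cf_a_plus: "cf_theta x n = of_int (cf_a x n) + 1 / cf_theta x (Suc n)"
  by (simp add: cf_a_def)

definition cf_P :: "real \<Rightarrow> nat \<Rightarrow> real" where
  "cf_P x n = of_int (cf_qs x n) + cf_theta x n * of_int (cf_qs x (Suc n))"

lemma cf_P_0 [simp]: "cf_P x 0 = 1"
  by (simp add: cf_P_def)

lemma cf_P_Suc:
  assumes "cf_theta x (Suc n) \<noteq> 0"
  shows "cf_P x (Suc n) = cf_theta x (Suc n) * cf_P x n"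
proof -
  have "cf_theta x (Suc n) * cf_theta x n = cf_theta x (Suc n) * of_int (cf_a x n) + 1"
    using cf_theta_eq_cf_a_plus[of x n] assms by (simp add: field_simps del: cf_theta.simps)
  then have "cf_theta x (Suc n) * cf_theta x n * of_int (cf_qs x (Suc n))
      = (cf_theta x (Suc n) * of_int (cf_a x n) + 1) * of_int (cf_qs x (Suc n))"
    by simp
  then show ?thesis
    by (simp add: cf_P_def algebra_simps del: cf_theta.simps)
qed

lemma cf_P_pos:
  assumes "x \<notin> \<rat>"
  shows "cf_P x n > 0"
proof (induction n)
  case (Suc n)
  have "cf_theta x (Suc n) > 0"
    using cf_theta_Suc_gt_1[OF assms, of n] by linarith
  with Suc show ?case by (simp only: cf_P_Suc) simp
qed simp

lemma inverse_cf_P_rec: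
  assumes "cf_theta x (Suc n) \<noteq> 0" and "cf_theta x (Suc (Suc n)) \<noteq> 0"
  shows "1 / cf_P x n = of_int (cf_a x (Suc n)) / cf_P x (Suc n) + 1 / cf_P x (Suc (Suc n))"
proof -
  have "of_int (cf_a x (Suc n)) / cf_P x (Suc n) + 1 / cf_P x (Suc (Suc n))
      = (of_int (cf_a x (Suc n)) + 1 / cf_theta x (Suc (Suc n))) / cf_P x (Suc n)"
    by (simp only: cf_P_Suc[OF assms(2)]) (simp add: add_divide_distrib)
  also have "\<dots> = cf_theta x (Suc n) / (cf_theta x (Suc n) * cf_P x n)"
    by (simp only: cf_theta_eq_cf_a_plus[of x "Suc n", symmetric] cf_P_Suc[OF assms(1)])
  finally show ?thesis using assms by simp
qed

lemma cf_qs_rec_perturbed: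
  fixes w :: "'a::real_field"
  assumes "x \<notin> \<rat>"
  shows "of_int (cf_qs x (Suc j)) - w / of_real (cf_P x j)
           + of_int (cf_a x (Suc j)) * (of_int (cf_qs x (Suc (Suc j))) + w / of_real (cf_P x (Suc j)))
         = of_int (cf_qs x (Suc (Suc (Suc j)))) - w / of_real (cf_P x (Suc (Suc j)))"
proof -
  have "cf_theta x (Suc n) \<noteq> 0" for n
    using cf_theta_Suc_gt_1[OF assms, of n] by linarith
  then have "1 / cf_P x j = of_int (cf_a x (Suc j)) / cf_P x (Suc j) + 1 / cf_P x (Suc (Suc j))"
    using inverse_cf_P_rec by blast
  then have "w * of_real (1 / cf_P x j)
      = w * of_real (of_int (cf_a x (Suc j)) / cf_P x (Suc j) + 1 / cf_P x (Suc (Suc j)))"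
    by (rule arg_cong)
  then show ?thesis
    by (simp add: algebra_simps divide_inverse of_real_inverse del: cf_theta.simps)
qed

lemma tau_eq_cf_P:
  "tau x j t = - ((-1) ^ j) *
     ((of_int (cf_qs x (Suc j)) - (-1) ^ j * (4 * \<i> * of_real pi * of_real t) / of_real (cf_P x j))
      / (of_int (cf_qs x (Suc (Suc j))) + (-1) ^ j * (4 * \<i> * of_real pi * of_real t)
           / of_real (cf_P x (Suc j))))"
  by (simp add: tau_def cf_q_def cf_P_def nat_add_distrib eval_nat_numeral
           del: cf_qs.simps cf_theta.simps)

lemma mult_sign_quotients_eq_minus_one:
  fixes s a M N D :: "'a::field"
  assumes "s * s = 1" and "N \<noteq> 0" and "D \<noteq> 0" and "M + a * N = D"
  shows "(- s * (M / N) - s * a) * (s * (N / D)) = -1"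
proof -
  have "(- s * (M / N) - s * a) * (s * (N / D)) = - (s * s) * ((M + a * N) / D)"
    using assms(2,3) by (simp add: field_simps)
  with assms show ?thesis by simp
qed

lemma Im_neg_one_power_mult: "Im ((-1) ^ j * z) = (-1) ^ j * Im z"
  by (induction j) auto

lemma of_int_add_diff_imaginary_neq_0:
  fixes q :: int and P t :: real
  assumes "P > 0" and "t > 0"
  shows "of_int q + (-1) ^ j * (4 * \<i> * of_real pi * of_real t) / of_real P \<noteq> 0"
    and "of_int q - (-1) ^ j * (4 * \<i> * of_real pi * of_real t) / of_real P \<noteq> 0"
  using assms by (auto dest!: arg_cong[where f = Im] simp: Im_neg_one_power_mult)

theorem theorem6p1:
  fixes \<theta> t :: real and j :: nat
  assumes "\<theta> \<notin> \<rat>" and "t > 0"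
  shows "(tau \<theta> j t - (-1) ^ j * of_int (cf_a \<theta> (j + 1))) * tau \<theta> (j + 1) t = -1"
proof -
  define s :: complex where "s = (-1) ^ j"
  define w where "w = s * (4 * \<i> * of_real pi * of_real t)"
  define q where "q = (\<lambda>n. complex_of_int (cf_qs \<theta> n))"
  define P where "P = (\<lambda>n. complex_of_real (cf_P \<theta> n))"
  define M where "M = q (Suc j) - w / P j"
  define N where "N = q (Suc (Suc j)) + w / P (Suc j)"
  define D where "D = q (Suc (Suc (Suc j))) - w / P (Suc (Suc j))"
  have tau_j: "tau \<theta> j t = - s * (M / N)"
    by (simp add: tau_eq_cf_P s_def w_def q_def P_def M_def N_def mult.assoc del: cf_qs.simps)
  have tau_Suc_j: "tau \<theta> (j + 1) t = s * (N / D)"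
    by (simp add: tau_eq_cf_P s_def w_def q_def P_def N_def D_def mult.assoc del: cf_qs.simps)
  have "s * s = 1"
    by (simp add: s_def flip: power_mult_distrib)
  moreover have "N \<noteq> 0" and "D \<noteq> 0"
    using of_int_add_diff_imaginary_neq_0[OF cf_P_pos[OF assms(1)] assms(2)]
    unfolding N_def D_def s_def w_def q_def P_def by (simp_all add: mult.assoc del: cf_qs.simps)
  moreover have "M + of_int (cf_a \<theta> (j + 1)) * N = D"
    using cf_qs_rec_perturbed[OF assms(1), of j w]
    unfolding M_def N_def D_def q_def P_def by (simp only: Suc_eq_plus1)
  ultimately show ?thesis
    unfolding tau_j tau_Suc_j s_def[symmetric] by (rule mult_sign_quotients_eq_minus_one)
qed

end
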